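(* Let $u$ be a smooth function on an open subset of $\mathbb{R}^n$ and let $m$ be a nonnegative integer. Then \[ \Delta\left[\left(\frac{1+|x|^2}{2}\right)^{m+1}\Delta^m u\right]+m(m+1)\left(\frac{1+|x|^2}{2}\right)^{m-1}\Delta^m u=\left(\frac{1+|x|^2}{2}\right)^{m}\Delta^{m+1}\left(\frac{1+|x|^2}{2}\,u\right). \]
   Context: $\Delta$ is the Euclidean Laplacian on $\mathbb{R}^n$. *)

theory Defs
  imports "HOL-Analysis.Analysis"
begin

definition partial :: "'n::finite \<Rightarrow> (real^'n \<Rightarrow> real) \<Rightarrow> real^'n \<Rightarrow> real" where
  "partial i f x = deriv (\<lambda>t. f (x + t *\<^sub>R axis i 1)) 0"

definition laplacian :: "(real^'n::finite \<Rightarrow> real) \<Rightarrow> real^'n \<Rightarrow> real" where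
  "laplacian f x = (\<Sum>i\<in>UNIV. partial i (partial i f) x)"

definition smooth_on :: "(real^'n::finite) set \<Rightarrow> (real^'n \<Rightarrow> real) \<Rightarrow> bool" where
  "smooth_on U f \<longleftrightarrow> (\<forall>is. foldr partial is f differentiable_on U)"

end

theory Submission
  imports Defs
begin

(* Write W = (1 + |x|^2) / 2 and E = x . grad for the Euler operator. Since grad W = x and
   Delta W = n, the product rule gives Delta (W g) = W Delta g + 2 E g + n g; and since
   [d_i, E] = d_i (by symmetry of second partials), Delta (E g) = E (Delta g) + 2 Delta g.
   Induction on k then yields
     Delta^(k+1) (W g) = W Delta^(k+1) g + (k+1) (2 E Delta^k g + (n + 2k) Delta^k g).
   On the other side grad W^(m+1) = (m+1) W^m x and
   Delta W^(m+1) = (m+1) (m W^(m-1) |x|^2 + n W^m), so the product rule expands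
   Delta (W^(m+1) Delta^m u); with |x|^2 = 2 W - 1 both sides of the identity reduce to W^m
   times the expression above for k = m. *)

section \<open>Partial derivatives\<close>

lemma has_real_derivative_along_line:
  assumes "(f has_derivative f') (at (z + t *\<^sub>R v))"
  shows "((\<lambda>s. f (z + s *\<^sub>R v)) has_real_derivative f' v) (at t)"
proof -
  have "((\<lambda>s. z + s *\<^sub>R v) has_derivative (\<lambda>s. s *\<^sub>R v)) (at t)"
    by (auto intro!: derivative_eq_intros)
  from has_derivative_compose[OF this assms]
  have "((\<lambda>s. f (z + s *\<^sub>R v)) has_derivative (\<lambda>s. f' (s *\<^sub>R v))) (at t)" .
  moreover have "linear f'"
    using assms has_derivative_linear by blast
  ultimately show ?thesis
    by (intro has_derivative_imp_has_field_derivative) (auto simp: linear_cmul)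
qed

lemma has_derivative_imp_partial_eq:
  assumes "(f has_derivative f') (at z)"
  shows "partial i f z = f' (axis i 1)"
  unfolding partial_def
  by (rule DERIV_imp_deriv, rule has_real_derivative_along_line) (use assms in simp)

lemma partial_has_real_derivative_along_axis:
  assumes "f differentiable at (z + t *\<^sub>R axis i 1)"
  shows "((\<lambda>s. f (z + s *\<^sub>R axis i 1)) has_real_derivative partial i f (z + t *\<^sub>R axis i 1)) (at t)"
proof -
  obtain f' where "(f has_derivative f') (at (z + t *\<^sub>R axis i 1))"
    using assms unfolding differentiable_def by blast
  then show ?thesis
    using has_real_derivative_along_line has_derivative_imp_partial_eq by metis
qed

lemma partial_cong_open:
  assumes "open U" "z \<in> U" "\<And>y. y \<in> U \<Longrightarrow> f y = g y"
  shows "partial i f z = partial i g z"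
  unfolding partial_def
proof (rule deriv_cong_ev[OF _ refl])
  let ?S = "(\<lambda>t::real. z + t *\<^sub>R axis i 1) -` U"
  have "open ?S"
    by (rule open_vimage[OF assms(1)]) (auto intro!: continuous_intros)
  moreover have "0 \<in> ?S"
    using assms(2) by simp
  ultimately show "\<forall>\<^sub>F t in nhds 0. f (z + t *\<^sub>R axis i 1) = g (z + t *\<^sub>R axis i 1)"
    unfolding eventually_nhds using assms(3) by blast
qed

lemma partial_const [simp]: "partial i (\<lambda>z. c) = (\<lambda>z. 0)"
  using has_derivative_imp_partial_eq[OF has_derivative_const] by blast

lemma partial_component: "partial i (\<lambda>z::real^'n::finite. z $ j) y = (if j = i then 1 else 0)"
proof -
  have "((\<lambda>z::real^'n. z $ j) has_derivative (\<lambda>z. z $ j)) (at y)"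
    by (rule bounded_linear_imp_has_derivative[OF bounded_linear_vec_nth])
  then show ?thesis
    by (simp add: has_derivative_imp_partial_eq axis_def)
qed

lemma differentiable_component: "(\<lambda>z::real^'n::finite. z $ j) differentiable at y"
  by (rule bounded_linear_imp_differentiable[OF bounded_linear_vec_nth])

lemma partial_add:
  assumes "f differentiable at y" "g differentiable at y"
  shows "partial i (\<lambda>z. f z + g z) y = partial i f y + partial i g y"
proof -
  obtain f' g' where "(f has_derivative f') (at y)" "(g has_derivative g') (at y)"
    using assms unfolding differentiable_def by blast
  then show ?thesis
    by (simp add: has_derivative_imp_partial_eq[OF has_derivative_add] has_derivative_imp_partial_eq)
qed

lemma partial_mult:
  assumes "f differentiable at y" "g differentiable at y"
  shows "partial i (\<lambda>z. f z * g z) y = partial i f y * g y + f y * partial i g y"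
proof -
  obtain f' g' where "(f has_derivative f') (at y)" "(g has_derivative g') (at y)"
    using assms unfolding differentiable_def by blast
  then show ?thesis
    by (simp add: has_derivative_imp_partial_eq[OF has_derivative_mult] has_derivative_imp_partial_eq)
qed

lemma partial_cmult:
  assumes "f differentiable at y"
  shows "partial i (\<lambda>z. c * f z) y = c * partial i f y"
  using partial_mult[OF differentiable_const assms] by simp

lemma partial_sum:
  assumes "finite S" "\<And>j. j \<in> S \<Longrightarrow> F j differentiable at y"
  shows "partial i (\<lambda>z. \<Sum>j\<in>S. F j z) y = (\<Sum>j\<in>S. partial i (F j) y)"
  using assms
proof (induction S rule: finite_induct)
  case empty
  then show ?case by simp
next
  case (insert a S)
  then have "partial i (\<lambda>z. F a z + (\<Sum>j\<in>S. F j z)) y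
      = partial i (F a) y + partial i (\<lambda>z. \<Sum>j\<in>S. F j z) y"
    by (intro partial_add) (auto intro!: differentiable_sum)
  with insert show ?case by simp
qed

definition euler_operator :: "(real^'n::finite \<Rightarrow> real) \<Rightarrow> real^'n \<Rightarrow> real" where
  "euler_operator g z = (\<Sum>j\<in>UNIV. z $ j * partial j g z)"

section \<open>Symmetry of second partial derivatives\<close>

definition second_difference :: "(real^'n::finite \<Rightarrow> real) \<Rightarrow> real^'n \<Rightarrow> 'n \<Rightarrow> 'n \<Rightarrow> real \<Rightarrow> real"
  where "second_difference f x i j h =
    f (x + h *\<^sub>R axis i 1 + h *\<^sub>R axis j 1) - f (x + h *\<^sub>R axis i 1) - f (x + h *\<^sub>R axis j 1) + f x"

lemma second_difference_commute: "second_difference f x i j h = second_difference f x j i h"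
  by (simp add: second_difference_def add_ac)

lemma second_difference_mean_value:
  fixes f :: "real^'n::finite \<Rightarrow> real"
  assumes "0 < h" and diff: "\<And>y. norm (y - x) \<le> 2 * h \<Longrightarrow> f differentiable at y"
  obtains \<xi> where "0 < \<xi>" "\<xi> < h"
    "second_difference f x i j h
       = h * (partial i f (x + h *\<^sub>R axis j 1 + \<xi> *\<^sub>R axis i 1) - partial i f (x + \<xi> *\<^sub>R axis i 1))"
proof -
  define g where "g t = f (x + h *\<^sub>R axis j 1 + t *\<^sub>R axis i 1) - f (x + t *\<^sub>R axis i 1)" for t
  have "DERIV g t :> partial i f (x + h *\<^sub>R axis j 1 + t *\<^sub>R axis i 1) - partial i f (x + t *\<^sub>R axis i 1)"
    if "0 \<le> t" "t \<le> h" for t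
  proof -
    have "norm (h *\<^sub>R axis j 1 + t *\<^sub>R axis i 1 :: real^'n) \<le> h + t"
      using norm_triangle_ineq[of "h *\<^sub>R axis j 1" "t *\<^sub>R axis i 1 :: real^'n"] that \<open>0 < h\<close> by simp
    then show ?thesis
      unfolding g_def using that
      by (intro DERIV_diff partial_has_real_derivative_along_axis diff) (auto simp: add.assoc)
  qed
  from MVT2[OF \<open>0 < h\<close> this] obtain \<xi> where "0 < \<xi>" "\<xi> < h"
    "g h - g 0 = (h - 0) * (partial i f (x + h *\<^sub>R axis j 1 + \<xi> *\<^sub>R axis i 1) - partial i f (x + \<xi> *\<^sub>R axis i 1))"
    by blast
  moreover have "g h - g 0 = second_difference f x i j h"
    by (simp add: g_def second_difference_def add_ac)
  ultimately show thesis
    using that by simp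
qed

lemma second_difference_bound:
  fixes f :: "real^'n::finite \<Rightarrow> real"
  assumes "0 < h" "0 \<le> e" "linear D"
    and diff: "\<And>y. norm (y - x) \<le> 2 * h \<Longrightarrow> f differentiable at y"
    and approx: "\<And>y. norm (y - x) \<le> 2 * h \<Longrightarrow>
      \<bar>partial i f y - partial i f x - D (y - x)\<bar> \<le> e * norm (y - x)"
  shows "\<bar>second_difference f x i j h / h\<^sup>2 - D (axis j 1)\<bar> \<le> 3 * e"
proof -
  obtain \<xi> where "0 < \<xi>" "\<xi> < h" and mv: "second_difference f x i j h
     = h * (partial i f (x + h *\<^sub>R axis j 1 + \<xi> *\<^sub>R axis i 1) - partial i f (x + \<xi> *\<^sub>R axis i 1))"
    using second_difference_mean_value[OF \<open>0 < h\<close> diff] by blast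
  let ?v = "h *\<^sub>R axis j 1 + \<xi> *\<^sub>R axis i 1 :: real^'n"
  let ?far = "partial i f (x + h *\<^sub>R axis j 1 + \<xi> *\<^sub>R axis i 1) - partial i f x - D ?v"
  let ?near = "partial i f (x + \<xi> *\<^sub>R axis i 1) - partial i f x - D (\<xi> *\<^sub>R axis i 1)"
  have "norm ?v \<le> 2 * h"
    using norm_triangle_ineq[of "h *\<^sub>R axis j 1" "\<xi> *\<^sub>R axis i 1 :: real^'n"] \<open>0 < h\<close> \<open>\<xi> < h\<close> \<open>0 < \<xi>\<close>
    by simp
  then have "\<bar>?far\<bar> \<le> e * norm ?v"
    using approx[of "x + ?v"] by (simp add: add.assoc)
  also have "\<dots> \<le> e * (2 * h)"
    using \<open>norm ?v \<le> 2 * h\<close> \<open>0 \<le> e\<close> by (rule mult_left_mono)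
  finally have far: "\<bar>?far\<bar> \<le> e * (2 * h)" .
  have "\<bar>?near\<bar> \<le> e * norm (\<xi> *\<^sub>R axis i 1 :: real^'n)"
    using approx[of "x + \<xi> *\<^sub>R axis i 1"] \<open>0 < \<xi>\<close> \<open>\<xi> < h\<close> by simp
  also have "\<dots> \<le> e * h"
    using \<open>0 < \<xi>\<close> \<open>\<xi> < h\<close> \<open>0 \<le> e\<close> by (simp add: mult_left_mono)
  finally have near: "\<bar>?near\<bar> \<le> e * h" .
  have "D ?v = h * D (axis j 1) + D (\<xi> *\<^sub>R axis i 1)"
    by (simp add: linear_add[OF \<open>linear D\<close>] linear_cmul[OF \<open>linear D\<close>])
  then have "second_difference f x i j h / h\<^sup>2 - D (axis j 1) = (?far - ?near) / h"
    unfolding mv using \<open>0 < h\<close> by (simp add: power2_eq_square field_simps)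
  moreover have "\<bar>?far - ?near\<bar> \<le> 3 * e * h"
    using abs_triangle_ineq4[of ?far ?near] far near by linarith
  ultimately show ?thesis
    using \<open>0 < h\<close> by (simp add: abs_divide divide_le_eq)
qed

lemma second_difference_tendsto:
  fixes f :: "real^'n::finite \<Rightarrow> real"
  assumes "0 < r" and diff: "\<And>y. norm (y - x) < r \<Longrightarrow> f differentiable at y"
    and D: "(partial i f has_derivative D) (at x)"
  shows "((\<lambda>h. second_difference f x i j h / h\<^sup>2) \<longlongrightarrow> D (axis j 1)) (at_right 0)"
  unfolding tendsto_iff
proof (intro allI impI)
  fix \<epsilon> :: real
  assume "0 < \<epsilon>"
  have "\<forall>e>0. \<exists>d>0. \<forall>y. norm (y - x) < d \<longrightarrow>
      norm (partial i f y - partial i f x - D (y - x)) \<le> e * norm (y - x)"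
    using D unfolding has_derivative_at_alt by blast
  then obtain d where "0 < d" and d: "\<And>y. norm (y - x) < d \<Longrightarrow>
      \<bar>partial i f y - partial i f x - D (y - x)\<bar> \<le> \<epsilon> / 4 * norm (y - x)"
    using \<open>0 < \<epsilon>\<close> by (metis real_norm_def zero_less_divide_iff zero_less_numeral)
  have bound: "dist (second_difference f x i j h / h\<^sup>2) (D (axis j 1)) \<le> 3 * (\<epsilon> / 4)"
    if "h \<in> {0<..<min r d / 2}" for h
    unfolding dist_real_def
    using that \<open>0 < \<epsilon>\<close> has_derivative_linear[OF D]
    by (intro second_difference_bound diff d) auto
  have "\<forall>\<^sub>F h in at_right 0. h \<in> {0<..<min r d / 2}"
    using \<open>0 < r\<close> \<open>0 < d\<close> by (intro eventually_at_right_real) simp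
  then show "\<forall>\<^sub>F h in at_right 0. dist (second_difference f x i j h / h\<^sup>2) (D (axis j 1)) < \<epsilon>"
  proof (rule eventually_mono)
    fix h
    assume "h \<in> {0<..<min r d / 2}"
    with bound[OF this] \<open>0 < \<epsilon>\<close> show "dist (second_difference f x i j h / h\<^sup>2) (D (axis j 1)) < \<epsilon>"
      by linarith
  qed
qed

theorem partial_commute:
  fixes f :: "real^'n::finite \<Rightarrow> real"
  assumes "open U" "x \<in> U" and diff: "\<And>y. y \<in> U \<Longrightarrow> f differentiable at y"
    and "partial i f differentiable at x" "partial j f differentiable at x"
  shows "partial j (partial i f) x = partial i (partial j f) x"
proof -
  obtain r where "0 < r" "ball x r \<subseteq> U"
    using assms open_contains_ball by blast
  then have diff_near: "\<And>y. norm (y - x) < r \<Longrightarrow> f differentiable at y"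
    using diff by (metis dist_commute dist_norm mem_ball subsetD)
  obtain Di Dj where Di: "(partial i f has_derivative Di) (at x)"
    and Dj: "(partial j f has_derivative Dj) (at x)"
    using assms unfolding differentiable_def by blast
  have "((\<lambda>h. second_difference f x i j h / h\<^sup>2) \<longlongrightarrow> Di (axis j 1)) (at_right 0)"
    by (rule second_difference_tendsto[OF \<open>0 < r\<close> diff_near Di])
  moreover have "((\<lambda>h. second_difference f x i j h / h\<^sup>2) \<longlongrightarrow> Dj (axis i 1)) (at_right 0)"
    using second_difference_tendsto[OF \<open>0 < r\<close> diff_near Dj] by (simp add: second_difference_commute)
  ultimately have "Di (axis j 1) = Dj (axis i 1)"
    by (rule tendsto_unique[OF trivial_limit_at_right_real])
  then show ?thesis
    by (simp add: has_derivative_imp_partial_eq[OF Di] has_derivative_imp_partial_eq[OF Dj])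
qed

section \<open>Smooth functions\<close>

fun differentiable_upto :: "nat \<Rightarrow> (real^'n::finite) set \<Rightarrow> (real^'n \<Rightarrow> real) \<Rightarrow> bool" where
  "differentiable_upto 0 U f \<longleftrightarrow> f differentiable_on U"
| "differentiable_upto (Suc k) U f \<longleftrightarrow>
     f differentiable_on U \<and> (\<forall>j. differentiable_upto k U (partial j f))"

lemma differentiable_upto_iff:
  "differentiable_upto k U f \<longleftrightarrow> (\<forall>is. length is \<le> k \<longrightarrow> foldr partial is f differentiable_on U)"
proof (induction k arbitrary: f)
  case 0
  then show ?case by simp
next
  case (Suc k)
  have split_last: "(\<forall>is. length is \<le> Suc k \<longrightarrow> P is) \<longleftrightarrow>
      P [] \<and> (\<forall>j is. length is \<le> k \<longrightarrow> P (is @ [j]))" for P :: "'a list \<Rightarrow> bool"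
  proof (intro iffI conjI allI impI)
    fix "is" :: "'a list"
    assume "P [] \<and> (\<forall>j is. length is \<le> k \<longrightarrow> P (is @ [j]))" "length is \<le> Suc k"
    then show "P is"
      by (cases "is" rule: rev_cases) auto
  qed auto
  show ?case
    unfolding split_last by (simp add: Suc.IH)
qed

lemma smooth_on_iff_differentiable_upto: "smooth_on U f \<longleftrightarrow> (\<forall>k. differentiable_upto k U f)"
  unfolding smooth_on_def differentiable_upto_iff by (metis le_refl)

lemma differentiable_upto_imp_differentiable_on: "differentiable_upto k U f \<Longrightarrow> f differentiable_on U"
  by (cases k) auto

lemma differentiable_upto_Suc_imp: "differentiable_upto (Suc k) U f \<Longrightarrow> differentiable_upto k U f"
  unfolding differentiable_upto_iff using le_SucI by blast

lemma differentiable_upto_const: "differentiable_upto k U (\<lambda>z. c)"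
  by (induction k arbitrary: c) auto

lemma differentiable_upto_component: "differentiable_upto k U (\<lambda>z. z $ j)"
proof (cases k)
  case 0
  then show ?thesis
    by (simp add: bounded_linear_imp_differentiable_on[OF bounded_linear_vec_nth])
next
  case (Suc k')
  have "partial i (\<lambda>z::real^_. z $ j) = (\<lambda>z. if j = i then 1 else 0)" for i
    by (simp add: fun_eq_iff partial_component)
  then show ?thesis
    using Suc by (simp add: differentiable_upto_const bounded_linear_imp_differentiable_on[OF bounded_linear_vec_nth])
qed

lemma smooth_on_partial: "smooth_on U f \<Longrightarrow> smooth_on U (partial j f)"
  unfolding smooth_on_iff_differentiable_upto by (metis differentiable_upto.simps(2))

lemma smooth_on_const: "smooth_on U (\<lambda>z. c)"
  unfolding smooth_on_iff_differentiable_upto using differentiable_upto_const by blast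

lemma smooth_on_component: "smooth_on U (\<lambda>z. z $ j)"
  unfolding smooth_on_iff_differentiable_upto using differentiable_upto_component by blast

context
  fixes U :: "(real^'n::finite) set"
  assumes "open U"
begin

lemma differentiable_on_cong_open:
  "(\<And>y. y \<in> U \<Longrightarrow> f y = g y) \<Longrightarrow> f differentiable_on U \<Longrightarrow> g differentiable_on U"
  by (metis differentiable_on_eq_differentiable_at[OF \<open>open U\<close>] differentiable_def
      has_derivative_transform_within_open[OF _ \<open>open U\<close>])

lemma differentiable_upto_cong:
  "(\<And>y. y \<in> U \<Longrightarrow> f y = g y) \<Longrightarrow> differentiable_upto k U f \<Longrightarrow> differentiable_upto k U g"
proof (induction k arbitrary: f g)
  case 0
  then show ?case using differentiable_on_cong_open[of f g] by simp
next
  case (Suc k)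
  from Suc.prems(2) have f: "f differentiable_on U" and pf: "\<And>j. differentiable_upto k U (partial j f)"
    by simp_all
  have "g differentiable_on U"
    using differentiable_on_cong_open[OF Suc.prems(1) f] .
  moreover have "differentiable_upto k U (partial j g)" for j
    using Suc.IH[OF partial_cong_open[OF \<open>open U\<close> _ Suc.prems(1)] pf] .
  ultimately show ?case by simp
qed

lemma differentiable_upto_imp_differentiable_at:
  "differentiable_upto k U f \<Longrightarrow> y \<in> U \<Longrightarrow> f differentiable at y"
  using differentiable_upto_imp_differentiable_on differentiable_on_eq_differentiable_at[OF \<open>open U\<close>]
  by blast

lemma differentiable_upto_add:
  "differentiable_upto k U f \<Longrightarrow> differentiable_upto k U g \<Longrightarrow> differentiable_upto k U (\<lambda>z. f z + g z)"
proof (induction k arbitrary: f g)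
  case 0
  then show ?case by (auto intro!: derivative_intros)
next
  case (Suc k)
  have "differentiable_upto k U (partial j (\<lambda>z. f z + g z))" for j
  proof (rule differentiable_upto_cong)
    show "differentiable_upto k U (\<lambda>z. partial j f z + partial j g z)"
      using Suc by auto
    show "partial j f y + partial j g y = partial j (\<lambda>z. f z + g z) y" if "y \<in> U" for y
      using differentiable_upto_imp_differentiable_at[OF Suc.prems(1) that]
        differentiable_upto_imp_differentiable_at[OF Suc.prems(2) that]
      by (simp add: partial_add)
  qed
  with Suc.prems show ?case by (auto intro!: derivative_intros)
qed

lemma differentiable_upto_mult:
  "differentiable_upto k U f \<Longrightarrow> differentiable_upto k U g \<Longrightarrow> differentiable_upto k U (\<lambda>z. f z * g z)"
proof (induction k arbitrary: f g)
  case 0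
  then show ?case by (auto intro!: derivative_intros)
next
  case (Suc k)
  have "differentiable_upto k U (partial j (\<lambda>z. f z * g z))" for j
  proof (rule differentiable_upto_cong)
    have "differentiable_upto k U f" "differentiable_upto k U g"
      using Suc.prems by (simp_all only: differentiable_upto_Suc_imp)
    moreover have "differentiable_upto k U (partial j f)" "differentiable_upto k U (partial j g)"
      using Suc.prems by simp_all
    ultimately show "differentiable_upto k U (\<lambda>z. partial j f z * g z + f z * partial j g z)"
      by (intro differentiable_upto_add Suc.IH)
    show "partial j f y * g y + f y * partial j g y = partial j (\<lambda>z. f z * g z) y" if "y \<in> U" for y
      using differentiable_upto_imp_differentiable_at[OF Suc.prems(1) that]
        differentiable_upto_imp_differentiable_at[OF Suc.prems(2) that]
      by (simp add: partial_mult)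
  qed
  with Suc.prems show ?case by (auto intro!: differentiable_on_mult)
qed

lemma smooth_on_imp_differentiable_at: "smooth_on U f \<Longrightarrow> y \<in> U \<Longrightarrow> f differentiable at y"
  unfolding smooth_on_iff_differentiable_upto using differentiable_upto_imp_differentiable_at by blast

lemma smooth_on_add: "smooth_on U f \<Longrightarrow> smooth_on U g \<Longrightarrow> smooth_on U (\<lambda>z. f z + g z)"
  unfolding smooth_on_iff_differentiable_upto using differentiable_upto_add by blast

lemma smooth_on_mult: "smooth_on U f \<Longrightarrow> smooth_on U g \<Longrightarrow> smooth_on U (\<lambda>z. f z * g z)"
  unfolding smooth_on_iff_differentiable_upto using differentiable_upto_mult by blast

lemma smooth_on_cmult: "smooth_on U f \<Longrightarrow> smooth_on U (\<lambda>z. c * f z)"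
  using smooth_on_mult[OF smooth_on_const] by blast

lemma smooth_on_power: "smooth_on U f \<Longrightarrow> smooth_on U (\<lambda>z. f z ^ k)"
  by (induction k) (simp_all add: smooth_on_const smooth_on_mult)

lemma smooth_on_sum:
  "finite S \<Longrightarrow> (\<And>j. j \<in> S \<Longrightarrow> smooth_on U (F j)) \<Longrightarrow> smooth_on U (\<lambda>z. \<Sum>j\<in>S. F j z)"
  by (induction S rule: finite_induct) (simp_all add: smooth_on_const smooth_on_add)

lemma smooth_on_laplacian: "smooth_on U f \<Longrightarrow> smooth_on U (laplacian f)"
  unfolding laplacian_def[abs_def] by (intro smooth_on_sum smooth_on_partial) auto

lemma smooth_on_laplacian_iterate: "smooth_on U f \<Longrightarrow> smooth_on U ((laplacian ^^ k) f)"
  by (induction k) (simp_all add: smooth_on_laplacian)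

section \<open>The Laplacian and the Euler operator\<close>

lemma smooth_on_euler_operator: "smooth_on U g \<Longrightarrow> smooth_on U (euler_operator g)"
  unfolding euler_operator_def[abs_def]
  by (intro smooth_on_sum smooth_on_mult smooth_on_component smooth_on_partial) auto

lemma partial_commute_smooth:
  "smooth_on U g \<Longrightarrow> z \<in> U \<Longrightarrow> partial j (partial i g) z = partial i (partial j g) z"
  by (intro partial_commute[OF \<open>open U\<close>] smooth_on_imp_differentiable_at smooth_on_partial)

lemma euler_operator_sum:
  assumes "finite S" "\<And>k. k \<in> S \<Longrightarrow> smooth_on U (F k)" "z \<in> U"
  shows "euler_operator (\<lambda>y. \<Sum>k\<in>S. F k y) z = (\<Sum>k\<in>S. euler_operator (F k) z)"
  using assms smooth_on_imp_differentiable_at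
  by (simp add: euler_operator_def partial_sum sum_distrib_left sum.swap[of _ S])

lemma partial_euler_operator:
  assumes g: "smooth_on U g" and "z \<in> U"
  shows "partial i (euler_operator g) z = partial i g z + euler_operator (partial i g) z"
proof -
  note diff = smooth_on_imp_differentiable_at[OF _ \<open>z \<in> U\<close>]
  have "partial i (euler_operator g) z = (\<Sum>j\<in>UNIV. partial i (\<lambda>y. y $ j * partial j g y) z)"
    unfolding euler_operator_def[abs_def]
    using g by (intro partial_sum differentiable_mult differentiable_component diff smooth_on_partial) auto
  also have "\<dots> = (\<Sum>j\<in>UNIV. (if j = i then partial j g z else 0) + z $ j * partial i (partial j g) z)"
    using g by (intro sum.cong refl)
      (simp add: partial_mult partial_component differentiable_component diff smooth_on_partial)
  also have "\<dots> = partial i g z + (\<Sum>j\<in>UNIV. z $ j * partial j (partial i g) z)"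
    using partial_commute_smooth[OF g \<open>z \<in> U\<close>] by (simp add: sum.distrib)
  finally show ?thesis
    by (simp add: euler_operator_def)
qed

lemma laplacian_cong:
  "(\<And>z. z \<in> U \<Longrightarrow> f z = g z) \<Longrightarrow> y \<in> U \<Longrightarrow> laplacian f y = laplacian g y"
  unfolding laplacian_def by (intro sum.cong refl partial_cong_open[OF \<open>open U\<close>]) auto

lemma laplacian_add:
  assumes f: "smooth_on U f" and g: "smooth_on U g" and "y \<in> U"
  shows "laplacian (\<lambda>z. f z + g z) y = laplacian f y + laplacian g y"
proof -
  note diff = smooth_on_imp_differentiable_at smooth_on_partial
  have "partial i (partial i (\<lambda>z. f z + g z)) y = partial i (\<lambda>z. partial i f z + partial i g z) y" for i
    by (rule partial_cong_open[OF \<open>open U\<close> \<open>y \<in> U\<close>]) (simp add: partial_add diff f g)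
  then show ?thesis
    unfolding laplacian_def using \<open>y \<in> U\<close> by (simp add: partial_add diff f g sum.distrib)
qed

lemma laplacian_mult:
  assumes f: "smooth_on U f" and g: "smooth_on U g" and "y \<in> U"
  shows "laplacian (\<lambda>z. f z * g z) y
    = f y * laplacian g y + 2 * (\<Sum>i\<in>UNIV. partial i f y * partial i g y) + g y * laplacian f y"
proof -
  note diff = smooth_on_imp_differentiable_at smooth_on_partial
  have "partial i (partial i (\<lambda>z. f z * g z)) y
      = partial i (\<lambda>z. partial i f z * g z + f z * partial i g z) y" for i
    by (rule partial_cong_open[OF \<open>open U\<close> \<open>y \<in> U\<close>]) (simp add: partial_mult diff f g)
  then show ?thesis
    unfolding laplacian_def using \<open>y \<in> U\<close>
    by (simp add: partial_add partial_mult differentiable_mult diff f g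
        sum.distrib sum_distrib_left algebra_simps)
qed

lemma laplacian_cmult:
  assumes "smooth_on U f" "y \<in> U"
  shows "laplacian (\<lambda>z. c * f z) y = c * laplacian f y"
  using laplacian_mult[OF smooth_on_const assms] by (simp add: laplacian_def)

lemma laplacian_euler_operator:
  assumes g: "smooth_on U g" and "y \<in> U"
  shows "laplacian (euler_operator g) y = euler_operator (laplacian g) y + 2 * laplacian g y"
proof -
  note smooth = smooth_on_partial smooth_on_euler_operator
  note diff = smooth_on_imp_differentiable_at
  have "partial i (partial i (euler_operator g)) y
      = 2 * partial i (partial i g) y + euler_operator (partial i (partial i g)) y" for i
  proof -
    have "partial i (partial i (euler_operator g)) y
        = partial i (\<lambda>z. partial i g z + euler_operator (partial i g) z) y"
      by (rule partial_cong_open[OF \<open>open U\<close> \<open>y \<in> U\<close>]) (rule partial_euler_operator[OF g])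
    then show ?thesis
      using g \<open>y \<in> U\<close> by (simp add: partial_add diff smooth partial_euler_operator)
  qed
  then have "laplacian (euler_operator g) y
      = 2 * laplacian g y + (\<Sum>i\<in>UNIV. euler_operator (partial i (partial i g)) y)"
    by (simp add: laplacian_def sum.distrib sum_distrib_left)
  also have "(\<Sum>i\<in>UNIV. euler_operator (partial i (partial i g)) y) = euler_operator (laplacian g) y"
    unfolding laplacian_def[abs_def] using g \<open>y \<in> U\<close> by (simp add: euler_operator_sum smooth)
  finally show ?thesis by simp
qed

end

section \<open>The weight (1 + |x|^2) / 2\<close>

abbreviation weight :: "real^'n::finite \<Rightarrow> real" where
  "weight z \<equiv> (1 + norm z ^ 2) / 2"

lemma weight_power_has_derivative:
  "((\<lambda>z. weight z ^ k) has_derivative (\<lambda>h. real k * weight y ^ (k - 1) * (y \<bullet> h))) (at y)"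
proof -
  have "((\<lambda>z. (1 + z \<bullet> z) / 2) has_derivative (\<lambda>h. y \<bullet> h)) (at y)"
    by (auto intro!: derivative_eq_intros simp: inner_commute)
  from has_derivative_power[OF this, of k] show ?thesis
    by (simp add: power2_norm_eq_inner mult_ac)
qed

lemma weight_power_differentiable: "(\<lambda>z. weight z ^ k) differentiable at y"
  using weight_power_has_derivative unfolding differentiable_def by blast

lemma partial_weight_power: "partial i (\<lambda>z. weight z ^ k) y = real k * weight y ^ (k - 1) * y $ i"
  by (simp add: has_derivative_imp_partial_eq[OF weight_power_has_derivative] inner_axis)

lemma smooth_on_weight_power:
  assumes "open U"
  shows "smooth_on U (\<lambda>z::real^'n::finite. weight z ^ k)"
proof -
  have "weight z = 1 / 2 * (1 + (\<Sum>j\<in>UNIV. z $ j * z $ j))" for z :: "real^'n"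
    by (simp add: power2_norm_eq_inner inner_vec_def)
  then show ?thesis
    by (simp only:) (intro smooth_on_power smooth_on_cmult smooth_on_add smooth_on_const smooth_on_sum
        smooth_on_mult smooth_on_component assms finite)
qed

lemma laplacian_weight_power:
  "laplacian (\<lambda>z. weight z ^ (k + 1)) y
     = real (k + 1) * (real k * weight y ^ (k - 1) * norm y ^ 2 + real CARD('n) * weight y ^ k)"
  for y :: "real^'n::finite"
proof -
  have "partial i (partial i (\<lambda>z. weight z ^ (k + 1))) y
      = real (k + 1) * (real k * weight y ^ (k - 1) * (y $ i * y $ i) + weight y ^ k)" for i
  proof -
    have first: "partial i (\<lambda>z. weight z ^ (k + 1)) = (\<lambda>z. (real (k + 1) * weight z ^ k) * z $ i)"
      by (rule ext) (simp only: partial_weight_power add_diff_cancel_right')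
    have "partial i (\<lambda>z. (real (k + 1) * weight z ^ k) * z $ i) y
        = partial i (\<lambda>z. real (k + 1) * weight z ^ k) y * y $ i
          + real (k + 1) * weight y ^ k * partial i (\<lambda>z. z $ i) y"
      by (intro partial_mult differentiable_mult differentiable_const weight_power_differentiable
          differentiable_component)
    also have "partial i (\<lambda>z. real (k + 1) * weight z ^ k) y
        = real (k + 1) * (real k * weight y ^ (k - 1) * y $ i)"
      by (simp only: partial_cmult[OF weight_power_differentiable] partial_weight_power)
    finally show ?thesis
      unfolding first by (simp add: partial_component algebra_simps)
  qed
  then show ?thesis
    by (simp add: laplacian_def sum.distrib sum_distrib_left[symmetric] power2_norm_eq_inner inner_vec_def)
qed

lemma laplacian_weight_power_mult:
  fixes U :: "(real^'n::finite) set"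
  assumes "open U" "smooth_on U g" "y \<in> U"
  shows "laplacian (\<lambda>z. weight z ^ (k + 1) * g z) y
    = weight y ^ (k + 1) * laplacian g y + 2 * real (k + 1) * weight y ^ k * euler_operator g y
      + real (k + 1) * (real k * weight y ^ (k - 1) * norm y ^ 2 + real CARD('n) * weight y ^ k) * g y"
proof -
  have "laplacian (\<lambda>z. weight z ^ (k + 1) * g z) y
    = weight y ^ (k + 1) * laplacian g y + 2 * (\<Sum>i\<in>UNIV. partial i (\<lambda>z. weight z ^ (k + 1)) y * partial i g y)
      + g y * laplacian (\<lambda>z. weight z ^ (k + 1)) y"
    by (rule laplacian_mult[OF assms(1) smooth_on_weight_power[OF assms(1)] assms(2,3)])
  also have "(\<Sum>i\<in>UNIV. partial i (\<lambda>z. weight z ^ (k + 1)) y * partial i g y)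
      = real (k + 1) * weight y ^ k * euler_operator g y"
    unfolding partial_weight_power euler_operator_def by (simp add: sum_distrib_left sum_distrib_right mult_ac)
  finally show ?thesis
    unfolding laplacian_weight_power by (simp add: algebra_simps)
qed

lemma laplacian_weight_mult:
  fixes U :: "(real^'n::finite) set"
  assumes "open U" "smooth_on U g" "y \<in> U"
  shows "laplacian (\<lambda>z. weight z * g z) y
    = weight y * laplacian g y + 2 * euler_operator g y + real CARD('n) * g y"
  using laplacian_weight_power_mult[OF assms, of 0] by simp

lemma laplacian_iterate_weight_mult:
  fixes U :: "(real^'n::finite) set"
  assumes "open U" "smooth_on U g" "y \<in> U"
  shows "(laplacian ^^ Suc k) (\<lambda>z. weight z * g z) y
    = weight y * (laplacian ^^ Suc k) g y
      + real (k + 1) * (2 * euler_operator ((laplacian ^^ k) g) y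
        + (real CARD('n) + 2 * real k) * (laplacian ^^ k) g y)"
  using \<open>y \<in> U\<close>
proof (induction k arbitrary: y)
  case 0
  then show ?case
    using laplacian_weight_mult[OF assms(1,2)] by simp
next
  case (Suc k)
  let ?L0 = "(laplacian ^^ k) g" and ?L1 = "(laplacian ^^ Suc k) g"
  let ?c = "real CARD('n) + 2 * real k"
  have L0: "smooth_on U ?L0" and L1: "smooth_on U ?L1"
    using smooth_on_laplacian_iterate[OF assms(1,2)] by blast+
  have "(laplacian ^^ Suc (Suc k)) (\<lambda>z. weight z * g z) y
      = laplacian ((laplacian ^^ Suc k) (\<lambda>z. weight z * g z)) y"
    by simp
  also have "\<dots> = laplacian (\<lambda>z. weight z * ?L1 z + real (k + 1) * (2 * euler_operator ?L0 z + ?c * ?L0 z)) y"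
    by (intro laplacian_cong[OF assms(1)] Suc.IH Suc.prems)
  also have "\<dots> = laplacian (\<lambda>z. weight z * ?L1 z) y
      + real (k + 1) * (2 * laplacian (euler_operator ?L0) y + ?c * laplacian ?L0 y)"
    using L0 L1 \<open>y \<in> U\<close> smooth_on_weight_power[OF assms(1), of 1]
    by (simp only: power_one_right laplacian_add[OF assms(1)] laplacian_cmult[OF assms(1)]
        smooth_on_add[OF assms(1)] smooth_on_cmult[OF assms(1)] smooth_on_mult[OF assms(1)]
        smooth_on_euler_operator[OF assms(1)])
  also have "laplacian (\<lambda>z. weight z * ?L1 z) y
      = weight y * laplacian ?L1 y + 2 * euler_operator ?L1 y + real CARD('n) * ?L1 y"
    by (rule laplacian_weight_mult[OF assms(1) L1 \<open>y \<in> U\<close>])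
  also have "laplacian (euler_operator ?L0) y = euler_operator ?L1 y + 2 * ?L1 y"
    using laplacian_euler_operator[OF assms(1) L0 \<open>y \<in> U\<close>] by simp
  finally show ?case
    by (simp add: algebra_simps)
qed

theorem lemma2p1:
  fixes u :: "real^'n \<Rightarrow> real" and U :: "(real^'n) set" and m :: nat
  assumes "open U" and "smooth_on U u" and "x \<in> U"
  shows "laplacian (\<lambda>y. ((1 + norm y ^ 2) / 2) ^ (m + 1) * (laplacian ^^ m) u y) x
         + real m * (real m + 1) * ((1 + norm x ^ 2) / 2) powi (int m - 1) * (laplacian ^^ m) u x
         = ((1 + norm x ^ 2) / 2) ^ m
           * (laplacian ^^ (m + 1)) (\<lambda>y. (1 + norm y ^ 2) / 2 * u y) x"
proof -
  define v where "v = (laplacian ^^ m) u"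
  define W where "W = weight x"
  have key: "real m * W ^ (m - 1) * norm x ^ 2 + real m * W powi (int m - 1) = 2 * real m * W ^ m"
    unfolding W_def by (cases m) (simp_all add: power_int_of_nat algebra_simps)
  have lhs: "laplacian (\<lambda>y. weight y ^ (m + 1) * v y) x
    = W ^ (m + 1) * laplacian v x + 2 * real (m + 1) * W ^ m * euler_operator v x
      + real (m + 1) * (real m * W ^ (m - 1) * norm x ^ 2 + real CARD('n) * W ^ m) * v x"
    unfolding W_def v_def
    by (rule laplacian_weight_power_mult[OF assms(1) smooth_on_laplacian_iterate[OF assms(1,2)] assms(3)])
  have rhs: "(laplacian ^^ (m + 1)) (\<lambda>y. weight y * u y) x
    = W * laplacian v x + real (m + 1) * (2 * euler_operator v x + (real CARD('n) + 2 * real m) * v x)"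
    unfolding W_def v_def using laplacian_iterate_weight_mult[OF assms, of m] by simp
  have "laplacian (\<lambda>y. weight y ^ (m + 1) * v y) x + real m * (real m + 1) * W powi (int m - 1) * v x
    = W ^ (m + 1) * laplacian v x + 2 * real (m + 1) * W ^ m * euler_operator v x
      + real (m + 1) * (real m * W ^ (m - 1) * norm x ^ 2 + real m * W powi (int m - 1)
        + real CARD('n) * W ^ m) * v x"
    unfolding lhs by (simp add: algebra_simps)
  also have "\<dots> = W ^ m * (laplacian ^^ (m + 1)) (\<lambda>y. weight y * u y) x"
    unfolding key rhs by (simp add: algebra_simps)
  finally show ?thesis
    unfolding v_def W_def .
qed

end
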